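(* Let $\alpha_i,\beta_i,\gamma_i,\delta_i\in(0,\pi)$ satisfy $\alpha_i\pm\beta_i\pm\gamma_i\pm\delta_i\not\equiv0\pmod{2\pi}$ for all choices of signs. Then $\sin\overline{\alpha}_i,\sin\overline{\beta}_i,\sin\overline{\gamma}_i,\sin\overline{\delta}_i\neq0$ (so $a_i,b_i,c_i,d_i$ are well-defined) and \[a_ib_i,\ a_ic_i,\ a_id_i,\ b_ic_i,\ b_id_i,\ c_id_i,\ M_i\notin\{0,1\}.\]
   Context: $\sigma_i=(\alpha_i+\beta_i+\gamma_i+\delta_i)/2$, $\overline{\alpha}_i=\sigma_i-\alpha_i$, $\overline{\beta}_i=\sigma_i-\beta_i$, $\overline{\gamma}_i=\sigma_i-\gamma_i$, $\overline{\delta}_i=\sigma_i-\delta_i$; $a_i=\sin\alpha_i/\sin\overline{\alpha}_i$, $b_i=\sin\beta_i/\sin\overline{\beta}_i$, $c_i=\sin\gamma_i/\sin\overline{\gamma}_i$, $d_i=\sin\delta_i/\sin\overline{\delta}_i$, $M_i=a_ib_ic_id_i$. *)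

theory Defs
  imports Complex_Main
begin

definition sig :: "real \<Rightarrow> real \<Rightarrow> real \<Rightarrow> real \<Rightarrow> real" where
  "sig \<alpha> \<beta> \<gamma> \<delta> = (\<alpha> + \<beta> + \<gamma> + \<delta>) / 2"

definition ratio :: "real \<Rightarrow> real \<Rightarrow> real" where
  "ratio s x = sin x / sin (s - x)"

end

theory Submission
  imports Defs "HOL-Analysis.Analysis"
begin

text \<open>Let \<open>x + y + z + w = 2\<sigma>\<close>.  The product-to-sum formula gives
  \<open>sin x sin y - sin (\<sigma> - x) sin (\<sigma> - y) = (cos (z + w) - cos (x + y)) / 2\<close>, so the product of
  two ratios is 1 iff \<open>cos (x + y) = cos (z + w)\<close>, i.e. iff \<open>x + y \<plusminus> (z + w) \<in> 2\<pi>\<int>\<close>.  For all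
  four ratios the same identities turn \<open>M = 1\<close> into
  \<open>(cos (x - y) - cos (z - w)) (cos (x + y) - cos (z + w)) = 0\<close>.  Similarly \<open>sin (\<sigma> - x) = 0\<close> iff
  \<open>y + z + w - x \<in> 2\<pi>\<int>\<close>, and no ratio vanishes because \<open>sin\<close> is positive on \<open>(0, \<pi>)\<close>.\<close>

lemma cos_eq_cos_iff_int:
  fixes x y :: real
  shows "cos x = cos y \<longleftrightarrow> (\<exists>k::int. x + y = 2 * pi * of_int k \<or> x - y = 2 * pi * of_int k)"
proof
  assume "cos x = cos y"
  then obtain n where "n \<in> \<int>" "x = y + 2 * n * pi \<or> x = - y + 2 * n * pi"
    by (auto simp: cos_eq)
  then obtain k :: int where "x = y + 2 * of_int k * pi \<or> x = - y + 2 * of_int k * pi"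
    by (auto elim: Ints_cases)
  then show "\<exists>k::int. x + y = 2 * pi * of_int k \<or> x - y = 2 * pi * of_int k"
    by (auto simp: algebra_simps)
next
  assume "\<exists>k::int. x + y = 2 * pi * of_int k \<or> x - y = 2 * pi * of_int k"
  then obtain k :: int where "x = - y + 2 * of_int k * pi \<or> x = y + 2 * of_int k * pi"
    by (auto simp: algebra_simps)
  then show "cos x = cos y"
    by (auto simp: cos_eq intro: Ints_of_int)
qed

lemma sin_complement_eq_0_iff:
  fixes s x y z w :: real
  assumes "x + y + z + w = 2 * s"
  shows "sin (s - x) = 0 \<longleftrightarrow> (\<exists>k::int. y + z + w - x = 2 * pi * of_int k)"
proof -
  have "sin (s - x) = 0 \<longleftrightarrow> (\<exists>k::int. s - x = of_int k * pi)"
    by (rule sin_zero_iff_int2)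
  also have "\<dots> \<longleftrightarrow> (\<exists>k::int. y + z + w - x = 2 * pi * of_int k)"
    using assms by (intro ex_cong1) (auto simp: algebra_simps)
  finally show ?thesis .
qed

lemma sin_mult_sin_complement:
  fixes s x y z w :: real
  assumes "x + y + z + w = 2 * s"
  shows "sin (s - x) * sin (s - y) = (cos (x - y) - cos (z + w)) / 2"
proof -
  have "(s - x) - (s - y) = - (x - y)" "(s - x) + (s - y) = z + w"
    using assms by simp_all
  then show ?thesis
    by (simp only: sin_times_sin cos_minus)
qed

lemma ratio_mult_ratio_eq_1_iff:
  fixes s x y z w :: real
  assumes sum: "x + y + z + w = 2 * s" and "sin (s - x) \<noteq> 0" "sin (s - y) \<noteq> 0"
  shows "ratio s x * ratio s y = 1 \<longleftrightarrow> cos (x + y) = cos (z + w)"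
proof -
  have "ratio s x * ratio s y = 1 \<longleftrightarrow> sin x * sin y = sin (s - x) * sin (s - y)"
    using assms(2,3) by (auto simp: ratio_def field_simps)
  also have "\<dots> \<longleftrightarrow> (cos (x - y) - cos (x + y)) / 2 = (cos (x - y) - cos (z + w)) / 2"
    unfolding sin_mult_sin_complement[OF sum] sin_times_sin[of x y] ..
  finally show ?thesis
    by simp
qed

lemma ratio_prod4_eq_1_iff:
  fixes s x y z w :: real
  assumes sum: "x + y + z + w = 2 * s"
    and "sin (s - x) \<noteq> 0" "sin (s - y) \<noteq> 0" "sin (s - z) \<noteq> 0" "sin (s - w) \<noteq> 0"
  shows "ratio s x * ratio s y * ratio s z * ratio s w = 1 \<longleftrightarrow>
    cos (x - y) = cos (z - w) \<or> cos (x + y) = cos (z + w)"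
proof -
  define p q u v where "p = cos (x - y)" and "q = cos (z - w)"
    and "u = cos (x + y)" and "v = cos (z + w)"
  have sum': "z + w + x + y = 2 * s"
    using sum by simp
  have complements: "sin (s - x) * sin (s - y) = (p - v) / 2" "sin (s - z) * sin (s - w) = (q - u) / 2"
    using sin_mult_sin_complement[OF sum] sin_mult_sin_complement[OF sum']
    by (simp_all add: p_def q_def u_def v_def)
  have angles: "sin x * sin y = (p - u) / 2" "sin z * sin w = (q - v) / 2"
    by (simp_all add: sin_times_sin p_def q_def u_def v_def)
  have "ratio s x * ratio s y * ratio s z * ratio s w = 1 \<longleftrightarrow>
      (sin x * sin y) * (sin z * sin w) = (sin (s - x) * sin (s - y)) * (sin (s - z) * sin (s - w))"
    using assms(2-5) by (auto simp: ratio_def field_simps)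
  also have "\<dots> \<longleftrightarrow> (p - u) / 2 * ((q - v) / 2) = (p - v) / 2 * ((q - u) / 2)"
    by (simp only: complements angles)
  also have "\<dots> \<longleftrightarrow> (p - q) * (u - v) = 0"
    by (auto simp: field_simps)
  also have "\<dots> \<longleftrightarrow> p = q \<or> u = v"
    by simp
  finally show ?thesis
    by (simp add: p_def q_def u_def v_def)
qed

lemma ratio_mult_ratio_notin_01:
  fixes s x y z w :: real
  assumes sum: "x + y + z + w = 2 * s"
    and "sin x \<noteq> 0" "sin y \<noteq> 0" "sin (s - x) \<noteq> 0" "sin (s - y) \<noteq> 0"
    and "cos (x + y) \<noteq> cos (z + w)"
  shows "ratio s x * ratio s y \<notin> {0, 1}"
  using assms(2-5) assms(6)[folded ratio_mult_ratio_eq_1_iff[OF sum assms(4,5)]]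
  by (simp add: ratio_def)

lemma ratio_prod4_notin_01:
  fixes s x y z w :: real
  assumes sum: "x + y + z + w = 2 * s"
    and "sin x \<noteq> 0" "sin y \<noteq> 0" "sin z \<noteq> 0" "sin w \<noteq> 0"
    and "sin (s - x) \<noteq> 0" "sin (s - y) \<noteq> 0" "sin (s - z) \<noteq> 0" "sin (s - w) \<noteq> 0"
    and "cos (x - y) \<noteq> cos (z - w)" "cos (x + y) \<noteq> cos (z + w)"
  shows "ratio s x * ratio s y * ratio s z * ratio s w \<notin> {0, 1}"
proof -
  have "ratio s x * ratio s y * ratio s z * ratio s w \<noteq> 1"
    using ratio_prod4_eq_1_iff[OF sum assms(6-9)] assms(10,11) by blast
  then show ?thesis
    using assms(2-9) by (simp add: ratio_def)
qed

theorem lemma2: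
  fixes \<alpha> \<beta> \<gamma> \<delta> :: real
  assumes range: "\<alpha> \<in> {0<..<pi}" "\<beta> \<in> {0<..<pi}" "\<gamma> \<in> {0<..<pi}" "\<delta> \<in> {0<..<pi}"
    and nondeg: "\<And>s1 s2 s3 (k::int). s1 \<in> {1, -1} \<Longrightarrow> s2 \<in> {1, -1} \<Longrightarrow> s3 \<in> {1, -1} \<Longrightarrow>
        \<alpha> + s1 * \<beta> + s2 * \<gamma> + s3 * \<delta> \<noteq> 2 * pi * of_int k"
  defines "a \<equiv> ratio (sig \<alpha> \<beta> \<gamma> \<delta>) \<alpha>" and "b \<equiv> ratio (sig \<alpha> \<beta> \<gamma> \<delta>) \<beta>"
    and "c \<equiv> ratio (sig \<alpha> \<beta> \<gamma> \<delta>) \<gamma>" and "d \<equiv> ratio (sig \<alpha> \<beta> \<gamma> \<delta>) \<delta>"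
  shows "sin (sig \<alpha> \<beta> \<gamma> \<delta> - \<alpha>) \<noteq> 0 \<and> sin (sig \<alpha> \<beta> \<gamma> \<delta> - \<beta>) \<noteq> 0 \<and> sin (sig \<alpha> \<beta> \<gamma> \<delta> - \<gamma>) \<noteq> 0 \<and> sin (sig \<alpha> \<beta> \<gamma> \<delta> - \<delta>) \<noteq> 0 \<and>
    a * b \<notin> {0, 1} \<and> a * c \<notin> {0, 1} \<and> a * d \<notin> {0, 1} \<and>
    b * c \<notin> {0, 1} \<and> b * d \<notin> {0, 1} \<and> c * d \<notin> {0, 1} \<and>
    a * b * c * d \<notin> {0, 1}"
proof -
  let ?s = "sig \<alpha> \<beta> \<gamma> \<delta>"
  have sum: "\<alpha> + \<beta> + \<gamma> + \<delta> = 2 * ?s" "\<beta> + \<alpha> + \<gamma> + \<delta> = 2 * ?s"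
    "\<gamma> + \<alpha> + \<beta> + \<delta> = 2 * ?s" "\<delta> + \<alpha> + \<beta> + \<gamma> = 2 * ?s"
    "\<alpha> + \<gamma> + \<beta> + \<delta> = 2 * ?s" "\<alpha> + \<delta> + \<beta> + \<gamma> = 2 * ?s"
    "\<beta> + \<gamma> + \<alpha> + \<delta> = 2 * ?s" "\<beta> + \<delta> + \<alpha> + \<gamma> = 2 * ?s"
    "\<gamma> + \<delta> + \<alpha> + \<beta> = 2 * ?s"
    by (simp_all add: sig_def)
  have sin_ne_0: "sin \<alpha> \<noteq> 0" "sin \<beta> \<noteq> 0" "sin \<gamma> \<noteq> 0" "sin \<delta> \<noteq> 0"
    using range sin_gt_zero[of \<alpha>] sin_gt_zero[of \<beta>] sin_gt_zero[of \<gamma>] sin_gt_zero[of \<delta>] by auto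
  have "\<beta> + \<gamma> + \<delta> - \<alpha> \<noteq> 2 * pi * of_int k" for k
    using nondeg[of "-1" "-1" "-1" "-k"] by (simp add: algebra_simps)
  then have sa: "sin (?s - \<alpha>) \<noteq> 0"
    by (simp add: sin_complement_eq_0_iff[OF sum(1)])
  have sb: "sin (?s - \<beta>) \<noteq> 0" and sc: "sin (?s - \<gamma>) \<noteq> 0" and sd: "sin (?s - \<delta>) \<noteq> 0"
    using nondeg[of "-1" 1 1] nondeg[of 1 "-1" 1] nondeg[of 1 1 "-1"]
    by (auto simp: sin_complement_eq_0_iff[OF sum(2)] sin_complement_eq_0_iff[OF sum(3)]
        sin_complement_eq_0_iff[OF sum(4)] algebra_simps)
  have ab: "cos (\<alpha> + \<beta>) \<noteq> cos (\<gamma> + \<delta>)" and ac: "cos (\<alpha> + \<gamma>) \<noteq> cos (\<beta> + \<delta>)"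
    and ad: "cos (\<alpha> + \<delta>) \<noteq> cos (\<beta> + \<gamma>)" and ab_diff: "cos (\<alpha> - \<beta>) \<noteq> cos (\<gamma> - \<delta>)"
    using nondeg[of 1 1 1] nondeg[of 1 "-1" "-1"] nondeg[of "-1" 1 "-1"] nondeg[of "-1" "-1" 1]
    by (auto simp: cos_eq_cos_iff_int algebra_simps)
  show ?thesis
    unfolding a_def b_def c_def d_def
    using sa sb sc sd
      ratio_mult_ratio_notin_01[OF sum(1) sin_ne_0(1,2) sa sb ab]
      ratio_mult_ratio_notin_01[OF sum(5) sin_ne_0(1,3) sa sc ac]
      ratio_mult_ratio_notin_01[OF sum(6) sin_ne_0(1,4) sa sd ad]
      ratio_mult_ratio_notin_01[OF sum(7) sin_ne_0(2,3) sb sc ad[symmetric]]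
      ratio_mult_ratio_notin_01[OF sum(8) sin_ne_0(2,4) sb sd ac[symmetric]]
      ratio_mult_ratio_notin_01[OF sum(9) sin_ne_0(3,4) sc sd ab[symmetric]]
      ratio_prod4_notin_01[OF sum(1) sin_ne_0 sa sb sc sd ab_diff ab]
    by blast
qed

end
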